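(* Let $h:[p]\to[m]$ be a random map with $h(j)=h_j\overset{iid}{\sim}\mathrm{Unif}([m])$ for each $j\in[p]$. For $k\in[m]$ let $h^{-1}(k)=\{j\in[p]:h(j)=k\}$ be the (random) preimage set. Let $\mathcal{A}\subset[p]$ with $a=|\mathcal{A}|>1$, and let $j\in[p]$. Then $$\mathbb{E}\Big[\frac{|\mathcal{A}\cap h^{-1}(h_j)\setminus\{j\}|}{|h^{-1}(h_j)|}\Big]=\frac{a-\mathbf{I}\{j\in\mathcal{A}\}}{p-1}\cdot\Big(1-\frac{m}{p}\Big(1-\Big(\frac{m-1}{m}\Big)^p\Big)\Big),$$ and $$\mathbb{E}\Big[\frac{|\mathcal{A}\cap h^{-1}(h_j)\setminus\{j\}|}{|h^{-1}(h_j)|^2}\Big]=m\,\frac{a-\mathbf{I}\{j\in\mathcal{A}\}}{p-1}\cdot\Big(\frac{1}{p-1}-\frac{m+1}{(p-1)^2}+\mathcal{O}(p^{-3})\Big).$$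
   Context: $[k]$ denotes $\{1,\dots,k\}$. $\mathbf{I}\{\cdot\}$ is the indicator function. *)

theory Defs
  imports "HOL-Probability.Probability"
begin

definition hash_pmf :: "nat \<Rightarrow> nat \<Rightarrow> (nat \<Rightarrow> nat) pmf" where
  "hash_pmf p m = Pi_pmf {1..p} 0 (\<lambda>_. pmf_of_set {1..m})"

definition preim :: "(nat \<Rightarrow> nat) \<Rightarrow> nat \<Rightarrow> nat \<Rightarrow> nat set" where
  "preim h p k = {i \<in> {1..p}. h i = k}"

end

theory Submission
  imports Defs "HOL-Real_Asymp.Real_Asymp"
begin

text \<open>
  Write the numerator as \<open>\<Sum>i\<in>A - {j}. [h i = h j]\<close>. Given \<open>h j = x\<close>, the term for \<open>i\<close>
  survives with probability \<open>1/m\<close>, and then the bucket of \<open>j\<close> has size \<open>K + 2\<close>, where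
  \<open>K \<sim> Bin(p - 2, 1/m)\<close> counts the remaining indices hashed to \<open>x\<close>. Hence, for any weight
  \<open>G\<close> of the bucket size (here \<open>1/n\<close> and \<open>1/n\<^sup>2\<close>), the expectation is \<open>|A - {j}| E[G(K + 2)] / m\<close>.

  Inverse rising factorials of a binomial variable have a closed form: from
  \<open>C(N,k) / ((k+1)\<cdots>(k+j)) = C(N+j,k+j) / ((N+1)\<cdots>(N+j))\<close> one gets
  \<open>E[1/((K+1)\<cdots>(K+j))] = P(Bin(N+j, q) \<ge> j) / ((N+1)\<cdots>(N+j) q\<^sup>j)\<close> for \<open>K \<sim> Bin(N, q)\<close>.
  As \<open>1/(k+2)\<close> is the difference of the cases \<open>j = 1, 2\<close>, the first formula is exact.
  For the second, \<open>1/(k+2)\<^sup>2\<close> falls short of the difference of the cases \<open>j = 2, 3\<close> by a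
  nonnegative amount at most twice the case \<open>j = 4\<close>, whose expectation is of order \<open>N\<^sup>-\<^sup>4\<close>,
  and the binomial tails \<open>P(Bin(N+j, q) < j)\<close> decay exponentially in \<open>N\<close>.
\<close>

section \<open>Inverse moments of binomial distributions\<close>

lemma fact_add_eq_fact_mult_pochhammer: "fact (n + j) = (fact n :: real) * pochhammer (real n + 1) j"
  unfolding pochhammer_fact pochhammer_product' by (simp add: add.commute)

lemma binomial_div_pochhammer:
  assumes "k \<le> n"
  shows "real (n choose k) / pochhammer (real k + 1) j
       = real ((n + j) choose (k + j)) / pochhammer (real n + 1) j"
proof -
  have pos: "pochhammer (real n + 1) j > 0" "pochhammer (real k + 1) j > 0"
    by (simp_all add: pochhammer_pos add_pos_nonneg)
  have "real (n choose k) / pochhammer (real k + 1) j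
      = fact n / (fact k * fact (n - k)) / pochhammer (real k + 1) j"
    using assms by (simp add: binomial_fact)
  also have "\<dots> = fact n * pochhammer (real n + 1) j
      / (fact k * pochhammer (real k + 1) j * fact (n - k)) / pochhammer (real n + 1) j"
    using pos by (simp add: field_simps)
  also have "\<dots> = fact (n + j) / (fact (k + j) * fact (n - k)) / pochhammer (real n + 1) j"
    by (simp only: fact_add_eq_fact_mult_pochhammer)
  also have "\<dots> = real ((n + j) choose (k + j)) / pochhammer (real n + 1) j"
    using binomial_fact[where 'a = real, of "k + j" "n + j"] assms by simp
  finally show ?thesis .
qed

lemma expectation_binomial_pmf:
  fixes f :: "nat \<Rightarrow> real"
  assumes "q \<in> {0..1}"
  shows "measure_pmf.expectation (binomial_pmf n q) f = (\<Sum>k\<le>n. f k * pmf (binomial_pmf n q) k)"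
  by (rule integral_measure_pmf_real) (use assms in \<open>auto simp: set_pmf_binomial_eq split: if_splits\<close>)

lemma integrable_binomial_pmf:
  fixes f :: "nat \<Rightarrow> real"
  assumes "q \<in> {0..1}"
  shows "integrable (binomial_pmf n q) f"
  using assms by (simp add: integrable_measure_pmf_finite finite_set_pmf_binomial_pmf)

lemma expectation_binomial_inverse_pochhammer:
  fixes q :: real
  assumes "0 < q" "q \<le> 1"
  shows "measure_pmf.expectation (binomial_pmf N q) (\<lambda>k. 1 / pochhammer (real k + 1) j)
       = (1 - measure_pmf.prob (binomial_pmf (N + j) q) {..<j}) / (pochhammer (real N + 1) j * q ^ j)"
proof -
  let ?B = "binomial_pmf (N + j) q"
  have "1 / pochhammer (real k + 1) j * pmf (binomial_pmf N q) k
      = pmf ?B (k + j) / (pochhammer (real N + 1) j * q ^ j)" if "k \<le> N" for k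
  proof -
    have "1 / pochhammer (real k + 1) j * pmf (binomial_pmf N q) k
        = real (N choose k) / pochhammer (real k + 1) j * q ^ k * (1 - q) ^ (N - k)"
      using assms by simp
    also have "\<dots> = real ((N + j) choose (k + j)) * q ^ (k + j) * (1 - q) ^ (N + j - (k + j))
                    / (pochhammer (real N + 1) j * q ^ j)"
      using assms that by (simp add: binomial_div_pochhammer power_add)
    finally show ?thesis using assms by simp
  qed
  then have "measure_pmf.expectation (binomial_pmf N q) (\<lambda>k. 1 / pochhammer (real k + 1) j)
      = (\<Sum>k\<le>N. pmf ?B (k + j)) / (pochhammer (real N + 1) j * q ^ j)"
    using assms by (simp add: expectation_binomial_pmf sum_divide_distrib)
  also have "(\<Sum>k\<le>N. pmf ?B (k + j)) = (\<Sum>l\<in>{j..N + j}. pmf ?B l)"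
    by (rule sum.reindex_bij_witness[of _ "\<lambda>l. l - j" "\<lambda>k. k + j"]) auto
  also have "\<dots> = 1 - measure_pmf.prob ?B {..<j}"
  proof -
    have "set_pmf ?B \<subseteq> {..<j} \<union> {j..N + j}"
      using assms by (auto simp: set_pmf_binomial_eq)
    then have "measure_pmf.prob ?B ({..<j} \<union> {j..N + j}) = 1"
      by (simp add: measure_pmf.prob_eq_1 AE_measure_pmf_iff subset_eq)
    then show ?thesis
      by (simp add: measure_measure_pmf_finite sum.union_disjoint ivl_disj_int)
  qed
  finally show ?thesis .
qed

lemma prob_binomial_lessThan_1:
  assumes "q \<in> {0..1}"
  shows "measure_pmf.prob (binomial_pmf n q) {..<1} = (1 - q) ^ n"
  using assms by (simp add: measure_measure_pmf_finite lessThan_Suc)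

lemma prob_binomial_lessThan_2:
  assumes "q \<in> {0..1}"
  shows "measure_pmf.prob (binomial_pmf (N + 2) q) {..<2} = (1 - q) ^ (N + 2) + (real N + 2) * q * (1 - q) ^ (N + 1)"
  using assms by (simp add: measure_measure_pmf_finite lessThan_Suc numeral_2_eq_2)

lemma prob_binomial_lessThan_le:
  assumes "q \<in> {0..1}"
  shows "measure_pmf.prob (binomial_pmf (N + j) q) {..<j} \<le> real j * (real N + real j) ^ j * (1 - q) ^ N"
proof -
  have "pmf (binomial_pmf (N + j) q) l \<le> (real N + real j) ^ j * (1 - q) ^ N" if "l < j" for l
  proof -
    have "real ((N + j) choose l) \<le> (real N + real j) ^ l"
      using of_nat_mono[OF binomial_le_pow[of l "N + j"]] that by simp
    also have "\<dots> \<le> (real N + real j) ^ j"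
      using that by (intro power_increasing) auto
    finally have "real ((N + j) choose l) \<le> (real N + real j) ^ j" .
    moreover have "q ^ l \<le> 1" "(1 - q) ^ (N + j - l) \<le> (1 - q) ^ N"
      using assms that by (auto intro: power_le_one power_decreasing)
    ultimately have "real ((N + j) choose l) * q ^ l * (1 - q) ^ (N + j - l)
        \<le> (real N + real j) ^ j * 1 * (1 - q) ^ N"
      using assms by (intro mult_mono) auto
    then show ?thesis
      using assms by simp
  qed
  then have "(\<Sum>l<j. pmf (binomial_pmf (N + j) q) l) \<le> (\<Sum>l<j. (real N + real j) ^ j * (1 - q) ^ N)"
    by (intro sum_mono) auto
  then show ?thesis by (simp add: measure_measure_pmf_finite)
qed

lemma expectation_binomial_inverse_add_two:
  fixes q :: real
  assumes "0 < q" "q \<le> 1"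
  shows "measure_pmf.expectation (binomial_pmf N q) (\<lambda>k. 1 / real (k + 2))
       = (1 - (1 - (1 - q) ^ (N + 2)) / ((real N + 2) * q)) / ((real N + 1) * q)"
proof -
  have "1 / real (k + 2) = 1 / pochhammer (real k + 1) 1 - 1 / pochhammer (real k + 1) 2" for k
    by (simp add: pochhammer_Suc numeral_2_eq_2 divide_simps)
  then have "measure_pmf.expectation (binomial_pmf N q) (\<lambda>k. 1 / real (k + 2))
      = measure_pmf.expectation (binomial_pmf N q) (\<lambda>k. 1 / pochhammer (real k + 1) 1)
      - measure_pmf.expectation (binomial_pmf N q) (\<lambda>k. 1 / pochhammer (real k + 1) 2)"
    using assms by (simp add: integrable_binomial_pmf)
  also have "\<dots> = (1 - (1 - q) ^ (N + 1)) / ((real N + 1) * q)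
      - (1 - (1 - q) ^ (N + 2) - (real N + 2) * q * (1 - q) ^ (N + 1)) / ((real N + 1) * (real N + 2) * q ^ 2)"
    using assms expectation_binomial_inverse_pochhammer[of q N 1] expectation_binomial_inverse_pochhammer[of q N 2]
      prob_binomial_lessThan_1[of q "N + 1"] prob_binomial_lessThan_2[of q N]
    by (simp add: pochhammer_Suc numeral_2_eq_2 diff_diff_eq add.commute)
  also have "\<dots> = (1 - (1 - (1 - q) ^ (N + 2)) / ((real N + 2) * q)) / ((real N + 1) * q)"
  proof -
    have "(1 - y) / ((real N + 1) * q) - (1 - (1 - q) * y - (real N + 2) * q * y) / ((real N + 1) * (real N + 2) * q ^ 2)
        = (1 - (1 - (1 - q) * y) / ((real N + 2) * q)) / ((real N + 1) * q)" for y
      using assms by (simp add: divide_simps power2_eq_square add_pos_pos) (simp add: algebra_simps)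
    from this[of "(1 - q) ^ (N + 1)"] show ?thesis by simp
  qed
  finally show ?thesis .
qed

definition inverse_square_gap :: "real \<Rightarrow> real" where
  "inverse_square_gap x = 1 / pochhammer (x + 1) 2 - 1 / pochhammer (x + 1) 3 - 1 / (x + 2) ^ 2"

lemma inverse_square_gap_eq:
  assumes "0 \<le> x"
  shows "inverse_square_gap x = 1 / ((x + 1) * (x + 2) ^ 2 * (x + 3))"
  unfolding inverse_square_gap_def using assms
  by (simp add: pochhammer_Suc eval_nat_numeral divide_simps) (simp add: algebra_simps)

lemma inverse_square_gap_nonneg: "0 \<le> x \<Longrightarrow> 0 \<le> inverse_square_gap x"
  by (simp add: inverse_square_gap_eq)

lemma inverse_square_gap_le:
  assumes "0 \<le> x"
  shows "inverse_square_gap x \<le> 2 / pochhammer (x + 1) 4"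
  using assms unfolding inverse_square_gap_eq[OF assms]
  by (simp add: pochhammer_Suc eval_nat_numeral divide_simps) (simp add: algebra_simps)

lemma expectation_binomial_inverse_square_add_two:
  fixes q :: real
  assumes "0 < q" "q \<le> 1"
  shows "(real N + 1) * q ^ 2 * measure_pmf.expectation (binomial_pmf N q) (\<lambda>k. 1 / real (k + 2) ^ 2)
       = (1 - measure_pmf.prob (binomial_pmf (N + 2) q) {..<2}) / (real N + 2)
       - (1 - measure_pmf.prob (binomial_pmf (N + 3) q) {..<3}) / ((real N + 2) * (real N + 3) * q)
       - (real N + 1) * q ^ 2 * measure_pmf.expectation (binomial_pmf N q) (\<lambda>k. inverse_square_gap (real k))"
proof -
  let ?E = "measure_pmf.expectation (binomial_pmf N q)"
  have "?E (\<lambda>k. 1 / real (k + 2) ^ 2)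
      = ?E (\<lambda>k. 1 / pochhammer (real k + 1) 2) - ?E (\<lambda>k. 1 / pochhammer (real k + 1) 3)
        - ?E (\<lambda>k. inverse_square_gap (real k))"
    unfolding inverse_square_gap_def using assms by (simp add: integrable_binomial_pmf add.commute)
  also have "\<dots> = (1 - measure_pmf.prob (binomial_pmf (N + 2) q) {..<2}) / (pochhammer (real N + 1) 2 * q ^ 2)
      - (1 - measure_pmf.prob (binomial_pmf (N + 3) q) {..<3}) / (pochhammer (real N + 1) 3 * q ^ 3)
      - ?E (\<lambda>k. inverse_square_gap (real k))"
    by (simp only: expectation_binomial_inverse_pochhammer[OF assms])
  finally show ?thesis
    using assms by (simp add: pochhammer_Suc eval_nat_numeral divide_simps) (simp add: algebra_simps)
qed

lemma expectation_binomial_inverse_square_gap_le: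
  fixes q :: real
  assumes "0 < q" "q \<le> 1"
  shows "measure_pmf.expectation (binomial_pmf N q) (\<lambda>k. inverse_square_gap (real k))
       \<le> 2 / (pochhammer (real N + 1) 4 * q ^ 4)"
proof -
  let ?E = "measure_pmf.expectation (binomial_pmf N q)"
  have "?E (\<lambda>k. inverse_square_gap (real k)) \<le> ?E (\<lambda>k. 2 / pochhammer (real k + 1) 4)"
    using assms by (intro integral_mono integrable_binomial_pmf) (simp_all add: inverse_square_gap_le)
  also have "\<dots> = 2 * ?E (\<lambda>k. 1 / pochhammer (real k + 1) 4)"
    by (simp flip: integral_mult_right_zero)
  also have "\<dots> = 2 * (1 - measure_pmf.prob (binomial_pmf (N + 4) q) {..<4}) / (pochhammer (real N + 1) 4 * q ^ 4)"
    by (simp add: expectation_binomial_inverse_pochhammer[OF assms])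
  also have "\<dots> \<le> 2 / (pochhammer (real N + 1) 4 * q ^ 4)"
    using assms pochhammer_pos[of "real N + 1" 4] by (intro divide_right_mono) auto
  finally show ?thesis .
qed

lemma polynomial_times_geometric_smallo:
  fixes r a b :: real
  assumes "0 \<le> r" "r < 1"
  shows "(\<lambda>n. (real n + a) ^ d * r ^ n) \<in> o(\<lambda>n. 1 / (real n + b) ^ k)"
proof (cases "r = 0")
  case True
  have zero: "eventually (\<lambda>n. (real n + a) ^ d * r ^ n = 0) at_top"
    using eventually_gt_at_top[of "0::nat"] by (rule eventually_mono) (simp add: True)
  show ?thesis
    by (subst landau_o.small.in_cong[OF zero]) simp
next
  case False
  with assms show ?thesis by real_asymp
qed

lemma prob_binomial_lessThan_smallo:
  fixes q b :: real
  assumes "0 < q" "q \<le> 1"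
  shows "(\<lambda>N. measure_pmf.prob (binomial_pmf (N + j) q) {..<j}) \<in> o(\<lambda>N. 1 / (real N + b) ^ k)"
proof (rule landau_o.big_small_trans)
  have "measure_pmf.prob (binomial_pmf (N + j) q) {..<j} \<le> (real N + real j) ^ (j + 1) * (1 - q) ^ N" for N
  proof -
    have "real j * (real N + real j) ^ j \<le> (real N + real j) ^ (j + 1)"
      by (simp add: mult_right_mono)
    then have "real j * (real N + real j) ^ j * (1 - q) ^ N \<le> (real N + real j) ^ (j + 1) * (1 - q) ^ N"
      using assms by (intro mult_right_mono) auto
    then show ?thesis
      using prob_binomial_lessThan_le[of q N j] assms by simp
  qed
  then show "(\<lambda>N. measure_pmf.prob (binomial_pmf (N + j) q) {..<j})
      \<in> O(\<lambda>N. (real N + real j) ^ (j + 1) * (1 - q) ^ N)"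
    using assms by (intro landau_o.big_mono always_eventually allI) simp
  show "(\<lambda>N. (real N + real j) ^ (j + 1) * (1 - q) ^ N) \<in> o(\<lambda>N. 1 / (real N + b) ^ k)"
    using assms by (intro polynomial_times_geometric_smallo) auto
qed

lemma bigo_of_norm_le:
  fixes f h :: "'a \<Rightarrow> 'b :: real_normed_field"
  assumes "\<And>x. norm (f x) \<le> norm (h x)" "h \<in> O[F](g)"
  shows "f \<in> O[F](g)"
  by (rule landau_o.big_trans[OF landau_o.big_mono assms(2)]) (use assms(1) in \<open>intro always_eventually allI\<close>)

text \<open>The remainder \<open>r\<close> of the second formula, written in terms of \<open>N = p - 2\<close>.\<close>

definition binomial_inverse_square_remainder :: "nat \<Rightarrow> nat \<Rightarrow> real" where
  "binomial_inverse_square_remainder m N =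
     (real N + 1) / real m ^ 2 * measure_pmf.expectation (binomial_pmf N (1 / real m)) (\<lambda>k. 1 / real (k + 2) ^ 2)
     - 1 / (real N + 1) + (real m + 1) / (real N + 1) ^ 2"

lemma binomial_inverse_square_remainder_eq:
  assumes "m \<ge> 1"
  shows "binomial_inverse_square_remainder m N
       = (1 / (real N + 2) - real m / ((real N + 2) * (real N + 3)) - 1 / (real N + 1) + (real m + 1) / (real N + 1) ^ 2)
         - measure_pmf.prob (binomial_pmf (N + 2) (1 / real m)) {..<2} / (real N + 2)
         + real m * measure_pmf.prob (binomial_pmf (N + 3) (1 / real m)) {..<3} / ((real N + 2) * (real N + 3))
         - (real N + 1) / real m ^ 2
           * measure_pmf.expectation (binomial_pmf N (1 / real m)) (\<lambda>k. inverse_square_gap (real k))"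
  using expectation_binomial_inverse_square_add_two[of "1 / real m" N] assms
  unfolding binomial_inverse_square_remainder_def
  by (simp add: power_divide diff_divide_distrib left_diff_distrib)

lemma binomial_inverse_square_gap_term_le:
  assumes "m \<ge> 1"
  shows "\<bar>(real N + 1) / real m ^ 2
           * measure_pmf.expectation (binomial_pmf N (1 / real m)) (\<lambda>k. inverse_square_gap (real k))\<bar>
       \<le> 2 * real m ^ 2 / ((real N + 2) * (real N + 3) * (real N + 4))"
proof -
  let ?S = "(real N + 1) / real m ^ 2
    * measure_pmf.expectation (binomial_pmf N (1 / real m)) (\<lambda>k. inverse_square_gap (real k))"
  have "0 \<le> ?S"
    by (intro mult_nonneg_nonneg integral_nonneg_AE AE_I2 inverse_square_gap_nonneg) simp_all
  have "?S \<le> (real N + 1) / real m ^ 2 * (2 / (pochhammer (real N + 1) 4 * (1 / real m) ^ 4))"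
    using assms by (intro mult_left_mono expectation_binomial_inverse_square_gap_le) auto
  also have "\<dots> = 2 * real m ^ 2 / ((real N + 2) * (real N + 3) * (real N + 4))"
    using assms by (simp add: pochhammer_Suc eval_nat_numeral divide_simps) (simp add: algebra_simps)
  finally show ?thesis
    using \<open>0 \<le> ?S\<close> by simp
qed

lemma binomial_inverse_square_remainder_bigo:
  assumes "m \<ge> 1"
  shows "binomial_inverse_square_remainder m \<in> O(\<lambda>N. 1 / (real N + 2) ^ 3)"
    (is "_ \<in> O(?g)")
proof -
  let ?P = "\<lambda>j N. measure_pmf.prob (binomial_pmf (N + j) (1 / real m)) {..<j}"
  let ?S = "\<lambda>N. (real N + 1) / real m ^ 2
    * measure_pmf.expectation (binomial_pmf N (1 / real m)) (\<lambda>k. inverse_square_gap (real k))"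
  have abs_div_le: "\<bar>x / d\<bar> \<le> \<bar>x\<bar>" if "1 \<le> d" for x d :: real
    using that by (simp add: divide_le_eq mult_le_cancel_left1)
  have tail: "?P j \<in> O(?g)" for j
    using assms by (intro landau_o.small_imp_big prob_binomial_lessThan_smallo) auto
  have main: "(\<lambda>N. 1 / (real N + 2) - real m / ((real N + 2) * (real N + 3))
      - 1 / (real N + 1) + (real m + 1) / (real N + 1) ^ 2) \<in> O(?g)"
    by real_asymp
  have tail2: "(\<lambda>N. ?P 2 N / (real N + 2)) \<in> O(?g)"
  proof (rule bigo_of_norm_le[OF _ tail[of 2]])
    show "norm (?P 2 N / (real N + 2)) \<le> norm (?P 2 N)" for N
      unfolding real_norm_def by (rule abs_div_le) simp
  qed
  have tail3: "(\<lambda>N. real m * ?P 3 N / ((real N + 2) * (real N + 3))) \<in> O(?g)"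
  proof (rule bigo_of_norm_le)
    show "norm (real m * ?P 3 N / ((real N + 2) * (real N + 3))) \<le> norm (real m * ?P 3 N)" for N
      unfolding real_norm_def using mult_mono[of 1 "real N + 2" 1 "real N + 3"] by (intro abs_div_le) simp
    show "(\<lambda>N. real m * ?P 3 N) \<in> O(?g)"
      using tail assms by simp
  qed
  have gap: "?S \<in> O(?g)"
  proof (rule bigo_of_norm_le)
    show "norm (?S N) \<le> norm (2 * real m ^ 2 / ((real N + 2) * (real N + 3) * (real N + 4)))" for N
      using binomial_inverse_square_gap_term_le[OF assms, of N] by simp
    show "(\<lambda>N. 2 * real m ^ 2 / ((real N + 2) * (real N + 3) * (real N + 4))) \<in> O(?g)"
      by real_asymp
  qed
  show ?thesis
    unfolding binomial_inverse_square_remainder_eq[OF assms]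
    by (rule sum_in_bigo(2)[OF sum_in_bigo(1)[OF sum_in_bigo(2)[OF main tail2] tail3] gap])
qed

section \<open>Collisions of a uniform random hash map\<close>

lemma map_pmf_pmf_of_set_eq_bernoulli:
  assumes "finite S" "x \<in> S"
  shows "map_pmf (\<lambda>y. y = x) (pmf_of_set S) = bernoulli_pmf (1 / real (card S))"
proof (rule pmf_eqI)
  fix b :: bool
  have S: "S \<noteq> {}" "card S > 0"
    using assms card_gt_0_iff by blast+
  have "S \<inter> (\<lambda>y. y = x) -` {b} = (if b then {x} else S - {x})"
    using assms by auto
  then show "pmf (map_pmf (\<lambda>y. y = x) (pmf_of_set S)) b = pmf (bernoulli_pmf (1 / real (card S))) b"
    using assms S by (simp add: pmf_map measure_pmf_of_set field_simps)
qed

lemma map_pmf_card_Pi_pmf_eq_binomial: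
  assumes "finite R" "finite S" "x \<in> S"
  shows "map_pmf (\<lambda>g. card {k \<in> R. g k = x}) (Pi_pmf R d (\<lambda>_. pmf_of_set S))
       = binomial_pmf (card R) (1 / real (card S))"
proof -
  have "card S > 0"
    using assms card_gt_0_iff by blast
  then have "binomial_pmf (card R) (1 / real (card S))
      = map_pmf (\<lambda>f. card {k \<in> R. f k}) (Pi_pmf R (d = x) (\<lambda>_. map_pmf (\<lambda>y. y = x) (pmf_of_set S)))"
    using assms by (simp add: binomial_pmf_altdef' map_pmf_pmf_of_set_eq_bernoulli)
  also have "\<dots> = map_pmf (\<lambda>g. card {k \<in> R. g k = x}) (Pi_pmf R d (\<lambda>_. pmf_of_set S))"
    using assms by (subst Pi_pmf_map[of _ _ d]) (simp_all add: pmf.map_comp o_def)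
  finally show ?thesis ..
qed

lemma expectation_Pi_pmf_uniform_insert:
  fixes F :: "('a \<Rightarrow> 'b) \<Rightarrow> real"
  assumes "finite A" "x \<notin> A" "finite S" "S \<noteq> {}"
  shows "measure_pmf.expectation (Pi_pmf (insert x A) d (\<lambda>_. pmf_of_set S)) F
       = (\<Sum>y\<in>S. measure_pmf.expectation (Pi_pmf A d (\<lambda>_. pmf_of_set S)) (\<lambda>f. F (f(x := y))))
         / real (card S)"
proof -
  have fin: "finite (set_pmf (Pi_pmf A d (\<lambda>_. pmf_of_set S)))"
    using assms by (auto simp: set_Pi_pmf)
  have "Pi_pmf (insert x A) d (\<lambda>_. pmf_of_set S)
      = pmf_of_set S \<bind> (\<lambda>y. map_pmf (\<lambda>f. f(x := y)) (Pi_pmf A d (\<lambda>_. pmf_of_set S)))"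
    using assms by (simp add: Pi_pmf_insert' map_pmf_def)
  then show ?thesis
    using assms fin by (simp add: pmf_expectation_bind_pmf_of_set sum_distrib_left divide_inverse_commute)
qed

lemma card_preim_fun_upd_collision:
  assumes "i \<noteq> j" "i \<in> {1..p}" "j \<in> {1..p}"
  shows "card (preim (g(i := x, j := x)) p x) = card {k \<in> {1..p} - {i, j}. g k = x} + 2"
proof -
  have "preim (g(i := x, j := x)) p x = insert j (insert i {k \<in> {1..p} - {i, j}. g k = x})"
    using assms unfolding preim_def by auto
  then show ?thesis
    using assms by simp
qed

lemma expectation_hash_collision:
  fixes G :: "nat \<Rightarrow> real"
  assumes "m \<ge> 1" "i \<noteq> j" "i \<in> {1..p}" "j \<in> {1..p}"
  shows "measure_pmf.expectation (hash_pmf p m) (\<lambda>h. (if h i = h j then 1 else 0) * G (card (preim h p (h j))))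
       = measure_pmf.expectation (binomial_pmf (p - 2) (1 / real m)) (\<lambda>k. G (k + 2)) / real m"
    (is "measure_pmf.expectation _ ?F = ?EB / _")
proof -
  define R where "R = {1..p} - {i, j}"
  define U where "U = pmf_of_set {1..m}"
  let ?E = "measure_pmf.expectation (Pi_pmf R 0 (\<lambda>_. U))"
  have R: "finite R" "i \<notin> R" "j \<notin> insert i R" "{1..p} = insert j (insert i R)" "card R = p - 2"
    using assms by (auto simp: R_def card_Diff_subset)
  have m: "finite {1..m}" "{1..m} \<noteq> {}" "card {1..m} = m"
    using assms by auto
  have inner: "?E (\<lambda>g. ?F (g(i := y, j := x))) = (if y = x then ?EB else 0)" if "x \<in> {1..m}" for x y
  proof (cases "y = x")
    case True
    have "?F (g(i := x, j := x)) = G (card {k \<in> R. g k = x} + 2)" for g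
      using assms(2) card_preim_fun_upd_collision[OF assms(2-4), of g x] unfolding R_def by simp
    moreover have "?E (\<lambda>g. G (card {k \<in> R. g k = x} + 2))
        = measure_pmf.expectation (map_pmf (\<lambda>g. card {k \<in> R. g k = x}) (Pi_pmf R 0 (\<lambda>_. U)))
            (\<lambda>k. G (k + 2))"
      by (simp only: integral_map_pmf)
    moreover have "map_pmf (\<lambda>g. card {k \<in> R. g k = x}) (Pi_pmf R 0 (\<lambda>_. U))
        = binomial_pmf (p - 2) (1 / real m)"
      unfolding U_def using map_pmf_card_Pi_pmf_eq_binomial[OF R(1) m(1) that] R(5) m(3) by simp
    ultimately show ?thesis
      using True by simp
  next
    case False
    then show ?thesis
      using assms(2) by simp
  qed
  have "measure_pmf.expectation (hash_pmf p m) ?F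
      = (\<Sum>x\<in>{1..m}. (\<Sum>y\<in>{1..m}. ?E (\<lambda>g. ?F (g(i := y, j := x)))) / real m) / real m"
    unfolding hash_pmf_def R(4) U_def using R m
    by (simp add: expectation_Pi_pmf_uniform_insert)
  also have "\<dots> = (\<Sum>x\<in>{1..m}. ?EB / real m) / real m"
  proof -
    have "(\<Sum>y\<in>{1..m}. ?E (\<lambda>g. ?F (g(i := y, j := x)))) = ?EB" if "x \<in> {1..m}" for x
      using that by (simp only: inner[OF that]) simp
    then show ?thesis
      by simp
  qed
  also have "\<dots> = ?EB / real m"
    using m by simp
  finally show ?thesis .
qed

lemma expectation_card_collisions:
  fixes G :: "nat \<Rightarrow> real"
  assumes "m \<ge> 1" "A \<subseteq> {1..p}" "j \<in> {1..p}"
  shows "measure_pmf.expectation (hash_pmf p m)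
           (\<lambda>h. real (card (A \<inter> preim h p (h j) - {j})) * G (card (preim h p (h j))))
       = (real (card A) - (if j \<in> A then 1 else 0))
           * (measure_pmf.expectation (binomial_pmf (p - 2) (1 / real m)) (\<lambda>k. G (k + 2)) / real m)"
proof -
  have fin: "finite (set_pmf (hash_pmf p m))"
    using assms(1) by (auto simp: hash_pmf_def set_Pi_pmf)
  have "finite A"
    using assms(2) finite_subset by blast
  have card_Diff: "real (card (A - {j})) = real (card A) - (if j \<in> A then 1 else 0)"
  proof (cases "j \<in> A")
    case True
    then have "card A \<ge> 1"
      using \<open>finite A\<close> by (auto simp: Suc_le_eq card_gt_0_iff)
    then show ?thesis
      using True \<open>finite A\<close> by (simp add: card_Diff_singleton)
  qed simp
  have "real (card (A \<inter> preim h p (h j) - {j})) * G (card (preim h p (h j)))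
      = (\<Sum>i\<in>A - {j}. (if h i = h j then 1 else 0) * G (card (preim h p (h j))))" for h
  proof -
    have "A \<inter> preim h p (h j) - {j} = {i \<in> A - {j}. h i = h j}"
      using assms(2) unfolding preim_def by auto
    moreover have "real (card {i \<in> A - {j}. h i = h j}) = (\<Sum>i\<in>A - {j}. if h i = h j then 1 else 0)"
      using \<open>finite A\<close> by (simp add: sum.inter_filter[symmetric])
    ultimately show ?thesis
      by (simp add: sum_distrib_right)
  qed
  then have "measure_pmf.expectation (hash_pmf p m)
           (\<lambda>h. real (card (A \<inter> preim h p (h j) - {j})) * G (card (preim h p (h j))))
      = (\<Sum>i\<in>A - {j}. measure_pmf.expectation (hash_pmf p m)
           (\<lambda>h. (if h i = h j then 1 else 0) * G (card (preim h p (h j)))))"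
    using fin by (simp add: integrable_measure_pmf_finite)
  also have "\<dots> = (\<Sum>i\<in>A - {j}.
      measure_pmf.expectation (binomial_pmf (p - 2) (1 / real m)) (\<lambda>k. G (k + 2)) / real m)"
    using assms by (intro sum.cong refl expectation_hash_collision) auto
  finally show ?thesis
    using card_Diff by simp
qed

lemma expectation_collision_fraction:
  assumes "m \<ge> 1" "A \<subseteq> {1..p}" "card A > 1" "j \<in> {1..p}"
  shows "measure_pmf.expectation (hash_pmf p m)
           (\<lambda>h. real (card (A \<inter> preim h p (h j) - {j})) / real (card (preim h p (h j))))
       = (real (card A) - (if j \<in> A then 1 else 0)) / (real p - 1)
           * (1 - real m / real p * (1 - ((real m - 1) / real m) ^ p))"
proof -
  have "card A \<le> p"
    using card_mono[OF _ assms(2)] by simp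
  then have "2 \<le> p"
    using assms(3) by linarith
  define N where "N = p - 2"
  have p: "p = N + 2" "real p - 1 = real N + 1"
    using \<open>2 \<le> p\<close> by (simp_all add: N_def)
  have "measure_pmf.expectation (hash_pmf p m)
           (\<lambda>h. real (card (A \<inter> preim h p (h j) - {j})) / real (card (preim h p (h j))))
      = (real (card A) - (if j \<in> A then 1 else 0))
        * (measure_pmf.expectation (binomial_pmf N (1 / real m)) (\<lambda>k. 1 / real (k + 2)) / real m)"
    using expectation_card_collisions[OF assms(1,2,4), of "\<lambda>n. 1 / real n"] by (simp add: N_def)
  also have "measure_pmf.expectation (binomial_pmf N (1 / real m)) (\<lambda>k. 1 / real (k + 2)) / real m
      = (1 - real m / real p * (1 - ((real m - 1) / real m) ^ p)) / (real p - 1)"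
  proof -
    have "(1 - (1 - y) / ((real N + 2) * (1 / real m))) / ((real N + 1) * (1 / real m)) / real m
        = (1 - real m / (real N + 2) * (1 - y)) / (real N + 1)" for y
      using assms(1) by (simp add: divide_simps)
    moreover have "(real m - 1) / real m = 1 - 1 / real m"
      using assms(1) by (simp add: diff_divide_distrib)
    ultimately show ?thesis
      using expectation_binomial_inverse_add_two[of "1 / real m" N] assms(1) by (simp add: p ac_simps)
  qed
  finally show ?thesis
    by simp
qed

lemma expectation_collision_fraction_square:
  assumes "m \<ge> 1" "A \<subseteq> {1..p}" "j \<in> {1..p}" "p \<ge> 2"
  shows "measure_pmf.expectation (hash_pmf p m)
           (\<lambda>h. real (card (A \<inter> preim h p (h j) - {j})) / real (card (preim h p (h j))) ^ 2)
       = real m * ((real (card A) - (if j \<in> A then 1 else 0)) / (real p - 1))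
           * (1 / (real p - 1) - (real m + 1) / (real p - 1) ^ 2 + binomial_inverse_square_remainder m (p - 2))"
proof -
  define N where "N = p - 2"
  define E where "E = measure_pmf.expectation (binomial_pmf N (1 / real m)) (\<lambda>k. 1 / real (k + 2) ^ 2)"
  have p: "real p - 1 = real N + 1"
    using assms(4) by (simp add: N_def)
  have "measure_pmf.expectation (hash_pmf p m)
           (\<lambda>h. real (card (A \<inter> preim h p (h j) - {j})) / real (card (preim h p (h j))) ^ 2)
      = (real (card A) - (if j \<in> A then 1 else 0)) * (E / real m)"
    using expectation_card_collisions[OF assms(1-3), of "\<lambda>n. 1 / real n ^ 2"]
    by (simp add: E_def N_def)
  also have "\<dots> = real m * ((real (card A) - (if j \<in> A then 1 else 0)) / (real p - 1))
      * (1 / (real p - 1) - (real m + 1) / (real p - 1) ^ 2 + binomial_inverse_square_remainder m (p - 2))"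
  proof -
    have alg: "M * (x / a) * (1 / a - (M + 1) / a ^ 2 + (a / M ^ 2 * e - 1 / a + (M + 1) / a ^ 2)) = x * (e / M)"
      if "a > 0" "M > 0" for M a x e :: real
      using that by (simp add: field_simps power2_eq_square)
    show ?thesis
      unfolding binomial_inverse_square_remainder_def p N_def[symmetric] E_def[symmetric]
      by (rule alg[symmetric]) (use assms(1) in auto)
  qed
  finally show ?thesis .
qed

theorem lemma4:
  fixes m :: nat
  assumes "m \<ge> 1"
  shows
   "(\<forall>p A j. A \<subseteq> {1..p} \<and> card A > 1 \<and> j \<in> {1..p} \<longrightarrow>
      measure_pmf.expectation (hash_pmf p m)
        (\<lambda>h. real (card (A \<inter> preim h p (h j) - {j})) / real (card (preim h p (h j))))
      = (real (card A) - (if j \<in> A then 1 else 0)) / (real p - 1)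
        * (1 - real m / real p * (1 - ((real m - 1) / real m) ^ p)))
    \<and>
    (\<exists>C P0. \<forall>p \<ge> P0. \<forall>A j. A \<subseteq> {1..p} \<and> card A > 1 \<and> j \<in> {1..p} \<longrightarrow>
      (\<exists>r. \<bar>r\<bar> \<le> C / real p ^ 3 \<and>
        measure_pmf.expectation (hash_pmf p m)
          (\<lambda>h. real (card (A \<inter> preim h p (h j) - {j})) / real (card (preim h p (h j))) ^ 2)
        = real m * ((real (card A) - (if j \<in> A then 1 else 0)) / (real p - 1))
          * (1 / (real p - 1) - (real m + 1) / (real p - 1) ^ 2 + r)))"
proof (intro conjI allI impI, goal_cases)
  case (1 p A j)
  then show ?case
    using expectation_collision_fraction[OF assms] by blast
next
  case 2
  obtain c where
    "eventually (\<lambda>N. norm (binomial_inverse_square_remainder m N) \<le> c * norm (1 / (real N + 2) ^ 3)) at_top"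
    using binomial_inverse_square_remainder_bigo[OF assms] by (rule landau_o.bigE)
  then obtain N0 where
    remainder_le: "\<And>N. N \<ge> N0 \<Longrightarrow> \<bar>binomial_inverse_square_remainder m N\<bar> \<le> c / (real N + 2) ^ 3"
    by (auto simp: eventually_at_top_linorder)
  show ?case
  proof (rule exI[of _ c], rule exI[of _ "N0 + 2"], intro allI impI, goal_cases)
    case (1 p A j)
    then have "real (p - 2) + 2 = real p"
      by simp
    with 1 show ?case
      using remainder_le[of "p - 2"] expectation_collision_fraction_square[OF assms, of A p j]
      by (intro exI[of _ "binomial_inverse_square_remainder m (p - 2)"]) auto
  qed
qed

end
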